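(* Let $G(t,z)$ and $G_n(t)$ be the EGF and row polynomials of the GKP triangle $\left[\begin{array}{cc|c}\alpha,&\beta&\gamma\\ \alpha',&\beta'&\gamma'\end{array}\right]$, and put $\mathcal A(t)=\alpha+\alpha't$, $\mathcal B(t)=(\beta+\beta't)t$, $\mathcal C(t)=\gamma+\gamma't$. (i) $G$ satisfies $[\mathcal A(t)z-1]\,\partial G/\partial z+\mathcal B(t)\,\partial G/\partial t+\mathcal C(t)\,G=0$ with $G(t,0)\equiv1$. (ii) $G_0\equiv1$ and $G_{n+1}(t)=[\mathcal A(t)n+\mathcal C(t)]G_n(t)+\mathcal B(t)G_n'(t)$ for all $n\ge0$. (iii) If $\beta\beta'\neq0$, then with $\hat\alpha=\alpha/\beta$, $\hat\alpha'=-\alpha'/\beta'$, $\hat\gamma=\gamma/\beta$, $\hat\gamma'=-\gamma'/\beta'$ and $D_t=d/dt$, for all $n\ge0$ $$\bigl[t^{1+\hat\alpha}(\beta+\beta't)^{1-\hat\alpha-\hat\alpha'}D_t\bigr]^n\frac{t^{\hat\gamma}}{(\beta+\beta't)^{\hat\gamma+\hat\gamma'}}=\frac{t^{\hat\alpha n+\hat\gamma}\,G_n(t)}{(\beta+\beta't)^{(\hat\alpha+\hat\alpha')n+\hat\gamma+\hat\gamma'}}$$ (as an identity of functions of $t$ on a domain where branches of the powers are fixed consistently).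
   Context: GKP triangle: for complex parameters $\alpha,\beta,\gamma,\alpha',\beta',\gamma'$, the array $T_{n,k}=\left[\begin{array}{cc|c}\alpha,&\beta&\gamma\\ \alpha',&\beta'&\gamma'\end{array}\right]_{n,k}$ ($n,k\in\mathbb Z$) is defined by $T_{0,0}=1$, $T_{n,k}=0$ if $n<0$, $k<0$ or $k>n$, and $T_{n+1,k+1}=[\alpha n+\beta(k+1)+\gamma]\,T_{n,k+1}+[\alpha' n+\beta' k+\gamma']\,T_{n,k}$ for all $n\ge0$ and all integers $k$. Its $n$th row polynomial is $G_n(t)=\sum_{k=0}^n T_{n,k}t^k$ and its EGF is $G(t,z)=\sum_{n\ge0}G_n(t)\,z^n/n!$. *)

theory Defs
  imports "HOL-Analysis.Analysis" "HOL-Computational_Algebra.Polynomial"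
          "HOL-Computational_Algebra.Formal_Power_Series"
begin

text \<open>GKP triangle T(n,k) with parameters a b c (alpha, beta, gamma) and
  a' b' c' (alpha', beta', gamma').  T(0,0)=1, T(n,k)=0 outside 0<=k<=n, and
  T(n+1,j) = (a n + b j + c) T(n,j) + (a' n + b' (j-1) + c') T(n,j-1)
  (this is the recurrence of the paper with j = k+1).\<close>
fun gkp :: "complex \<Rightarrow> complex \<Rightarrow> complex \<Rightarrow> complex \<Rightarrow> complex \<Rightarrow> complex
            \<Rightarrow> nat \<Rightarrow> int \<Rightarrow> complex" where
  "gkp a b c a' b' c' 0 k = (if k = 0 then 1 else 0)"
| "gkp a b c a' b' c' (Suc n) j =
     (if j < 0 \<or> j > int n + 1 then 0
      else (a * of_nat n + b * of_int j + c) * gkp a b c a' b' c' n j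
         + (a' * of_nat n + b' * of_int (j - 1) + c') * gkp a b c a' b' c' n (j - 1))"

definition gkp_row :: "complex \<Rightarrow> complex \<Rightarrow> complex \<Rightarrow> complex \<Rightarrow> complex \<Rightarrow> complex
            \<Rightarrow> nat \<Rightarrow> complex poly" where
  "gkp_row a b c a' b' c' n = (\<Sum>k\<le>n. monom (gkp a b c a' b' c' n (int k)) k)"

text \<open>EGF G(t,z) = sum_n G_n(t) z^n / n!, as a formal power series in z
  whose coefficients are polynomials in t.\<close>
definition gkp_egf :: "complex \<Rightarrow> complex \<Rightarrow> complex \<Rightarrow> complex \<Rightarrow> complex \<Rightarrow> complex
            \<Rightarrow> complex poly fps" where
  "gkp_egf a b c a' b' c' = Abs_fps (\<lambda>n. smult (1 / fact n) (gkp_row a b c a' b' c' n))"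

definition fps_pderiv_t :: "complex poly fps \<Rightarrow> complex poly fps" where
  "fps_pderiv_t F = Abs_fps (\<lambda>n. pderiv (fps_nth F n))"

end

theory Submission
  imports Defs
begin

text \<open>Comparing coefficients of \<open>t\<^sup>k\<close> in the triangle recurrence gives the row
  recurrence (ii), and comparing coefficients of \<open>z\<^sup>n\<close> turns (ii) into the PDE (i).
  For (iii), the operator \<open>t\<^bsup>1+r\<^esup> u\<^bsup>1-s\<^esup> D\<^sub>t\<close> with \<open>u = \<beta> + \<beta>'t\<close> sends
  \<open>t\<^sup>p P / u\<^sup>q\<close> to \<open>t\<^bsup>p+r\<^esup> ((p u - q \<beta>' t) P + t u P') / u\<^bsup>q+s\<^esup>\<close>; for the exponents
  attached to row \<open>n\<close> the bracket is exactly the right-hand side of (ii), so (iii) follows by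
  induction on \<open>n\<close>, run on the open set where both principal powers are holomorphic.\<close>

lemma gkp_eq_0_outside:
  "j < 0 \<or> j > int n \<Longrightarrow> gkp a b c a' b' c' n j = 0"
  by (induction n arbitrary: j) auto

lemma coeff_gkp_row:
  "coeff (gkp_row a b c a' b' c' n) k = gkp a b c a' b' c' n (int k)"
  unfolding gkp_row_def by (auto simp: coeff_sum coeff_monom gkp_eq_0_outside)

lemma gkp_row_0: "gkp_row a b c a' b' c' 0 = 1"
  by (simp add: gkp_row_def)

lemma gkp_row_Suc:
  "gkp_row a b c a' b' c' (Suc n) =
     (smult (of_nat n) [:a, a':] + [:c, c':]) * gkp_row a b c a' b' c' n
       + [:0, b, b':] * pderiv (gkp_row a b c a' b' c' n)"
proof (rule poly_eqI)
  fix k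
  show "coeff (gkp_row a b c a' b' c' (Suc n)) k =
    coeff ((smult (of_nat n) [:a, a':] + [:c, c':]) * gkp_row a b c a' b' c' n
       + [:0, b, b':] * pderiv (gkp_row a b c a' b' c' n)) k"
    by (cases k; cases "k - 1")
       (auto simp: coeff_gkp_row coeff_pderiv gkp_eq_0_outside algebra_simps coeff_pCons)
qed

lemma egf_pde_of_row_recurrence:
  fixes A B C :: "complex poly" and P :: "nat \<Rightarrow> complex poly"
  assumes rec: "\<And>n. P (Suc n) = (smult (of_nat n) A + C) * P n + B * pderiv (P n)"
  defines "F \<equiv> Abs_fps (\<lambda>n. smult (1 / fact n) (P n))"
  shows "(fps_const A * fps_X - 1) * fps_deriv F + fps_const B * fps_pderiv_t F
           + fps_const C * F = 0"
proof (rule fps_ext)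
  fix n
  have X: "fps_nth (fps_X * fps_deriv F) n = smult (1 / fact n) (smult (of_nat n) (P n))"
    by (cases n) (simp_all add: F_def field_simps of_nat_poly)
  have D: "fps_nth (fps_deriv F) n = smult (1 / fact n) (P (Suc n))"
    by (simp add: F_def field_simps of_nat_poly del: of_nat_Suc)
  have "fps_nth ((fps_const A * fps_X - 1) * fps_deriv F + fps_const B * fps_pderiv_t F
           + fps_const C * F) n
      = A * fps_nth (fps_X * fps_deriv F) n - fps_nth (fps_deriv F) n
          + B * pderiv (fps_nth F n) + C * fps_nth F n"
    by (simp add: fps_pderiv_t_def algebra_simps)
  also have "\<dots> = smult (1 / fact n)
      ((smult (of_nat n) A + C) * P n + B * pderiv (P n) - P (Suc n))"
    unfolding X D by (simp add: F_def pderiv_smult smult_add_right smult_diff_right algebra_simps)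
  finally show "fps_nth ((fps_const A * fps_X - 1) * fps_deriv F + fps_const B * fps_pderiv_t F
           + fps_const C * F) n = fps_nth 0 n"
    by (simp add: rec)
qed

lemma weighted_deriv_powr_poly:
  fixes b b' p q r s t :: complex and P :: "complex poly"
  assumes "t \<notin> \<real>\<^sub>\<le>\<^sub>0" "b + b' * t \<notin> \<real>\<^sub>\<le>\<^sub>0"
  shows "t powr (1 + r) * (b + b' * t) powr (1 - s)
           * deriv (\<lambda>x. x powr p * poly P x / (b + b' * x) powr q) t
       = t powr (p + r) * ((p * (b + b' * t) - q * b' * t) * poly P t
                           + t * (b + b' * t) * poly (pderiv P) t)
           / (b + b' * t) powr (q + s)"
proof -
  define u where "u = b + b' * t"
  have "t \<noteq> 0" "u \<noteq> 0" using assms by (auto simp: u_def)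
  then have nz: "t powr p \<noteq> 0" "u powr q \<noteq> 0" "t powr r \<noteq> 0" "u powr s \<noteq> 0" by auto
  have "((\<lambda>x. x powr p * poly P x / (b + b' * x) powr q) has_field_derivative
          ((p * t powr (p - 1) * poly P t + t powr p * poly (pderiv P) t) * u powr q
            - t powr p * poly P t * (q * u powr (q - 1) * b')) / (u powr q * u powr q)) (at t)"
    unfolding u_def using assms
    by (auto intro!: derivative_eq_intros has_field_derivative_powr)
  then have dv: "deriv (\<lambda>x. x powr p * poly P x / (b + b' * x) powr q) t =
          ((p * (t powr p / t) * poly P t + t powr p * poly (pderiv P) t) * u powr q
            - t powr p * poly P t * (q * (u powr q / u) * b')) / (u powr q * u powr q)"
    by (simp add: DERIV_imp_deriv powr_diff)
  have e: "t powr (1 + r) = t * t powr r" "u powr (1 - s) = u / u powr s"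
    "t powr (p + r) = t powr p * t powr r" "u powr (q + s) = u powr q * u powr s"
    by (simp_all add: powr_add powr_diff)
  show ?thesis
    unfolding u_def[symmetric] dv e using \<open>t \<noteq> 0\<close> \<open>u \<noteq> 0\<close> nz by (simp add: field_simps)
qed

lemma funpow_weighted_deriv_eqI:
  fixes w f0 :: "'a::real_normed_field \<Rightarrow> 'a" and F :: "nat \<Rightarrow> 'a \<Rightarrow> 'a"
  assumes "open S" and init: "\<And>t. t \<in> S \<Longrightarrow> f0 t = F 0 t"
    and step: "\<And>n t. t \<in> S \<Longrightarrow> w t * deriv (F n) t = F (Suc n) t"
    and "t \<in> S"
  shows "((\<lambda>f t. w t * deriv f t) ^^ n) f0 t = F n t"
  using \<open>t \<in> S\<close>
proof (induction n arbitrary: t)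
  case 0
  then show ?case by (simp add: init)
next
  case (Suc n)
  have "eventually (\<lambda>x. ((\<lambda>f t. w t * deriv f t) ^^ n) f0 x = F n x) (nhds t)"
    using eventually_nhds_in_open[OF \<open>open S\<close> Suc.prems] by (auto elim!: eventually_mono Suc.IH)
  then show ?case
    using step[OF Suc.prems] by (simp add: deriv_cong_ev[OF _ refl])
qed

lemma gkp_row_weighted_deriv_Suc:
  fixes a b c a' b' c' x :: complex
  assumes "b \<noteq> 0" "b' \<noteq> 0" "x \<notin> \<real>\<^sub>\<le>\<^sub>0" "b + b' * x \<notin> \<real>\<^sub>\<le>\<^sub>0"
  defines "ah \<equiv> a / b" and "ah' \<equiv> - a' / b'" and "ch \<equiv> c / b" and "ch' \<equiv> - c' / b'"
  shows "x powr (1 + ah) * (b + b' * x) powr (1 - ah - ah') *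
      deriv (\<lambda>x. x powr (ah * of_nat n + ch) * poly (gkp_row a b c a' b' c' n) x
                 / (b + b' * x) powr ((ah + ah') * of_nat n + ch + ch')) x
    = x powr (ah * of_nat (Suc n) + ch) * poly (gkp_row a b c a' b' c' (Suc n)) x
        / (b + b' * x) powr ((ah + ah') * of_nat (Suc n) + ch + ch')"
proof -
  define p where "p = ah * of_nat n + ch"
  define q where "q = (ah + ah') * of_nat n + ch + ch'"
  define P where "P = gkp_row a b c a' b' c' n"
  have "(p * (b + b' * x) - q * b' * x) * poly P x + x * (b + b' * x) * poly (pderiv P) x
      = poly (gkp_row a b c a' b' c' (Suc n)) x"
    using \<open>b \<noteq> 0\<close> \<open>b' \<noteq> 0\<close>
    by (simp add: P_def p_def q_def ah_def ah'_def ch_def ch'_def gkp_row_Suc field_simps)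
  then have "x powr (1 + ah) * (b + b' * x) powr (1 - ah - ah') *
      deriv (\<lambda>x. x powr p * poly P x / (b + b' * x) powr q) x
    = x powr (p + ah) * poly (gkp_row a b c a' b' c' (Suc n)) x
        / (b + b' * x) powr (q + (ah + ah'))"
    using weighted_deriv_powr_poly[of x b b' ah "ah + ah'" p P q] assms(3,4)
    by (simp add: diff_diff_eq)
  moreover have "p + ah = ah * of_nat (Suc n) + ch"
    and "q + (ah + ah') = (ah + ah') * of_nat (Suc n) + ch + ch'"
    by (simp_all add: p_def q_def algebra_simps)
  ultimately show ?thesis
    by (simp only: p_def q_def P_def)
qed

lemma gkp_row_operator_power:
  fixes a b c a' b' c' t :: complex
  assumes "b \<noteq> 0" "b' \<noteq> 0" "t \<notin> \<real>\<^sub>\<le>\<^sub>0" "b + b' * t \<notin> \<real>\<^sub>\<le>\<^sub>0"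
  defines "ah \<equiv> a / b" and "ah' \<equiv> - a' / b'" and "ch \<equiv> c / b" and "ch' \<equiv> - c' / b'"
  shows "((\<lambda>f t. t powr (1 + ah) * (b + b' * t) powr (1 - ah - ah') * deriv f t) ^^ n)
           (\<lambda>t. t powr ch / (b + b' * t) powr (ch + ch')) t
       = t powr (ah * of_nat n + ch) * poly (gkp_row a b c a' b' c' n) t
           / (b + b' * t) powr ((ah + ah') * of_nat n + ch + ch')"
proof -
  define S where "S = {t. t \<notin> \<real>\<^sub>\<le>\<^sub>0 \<and> b + b' * t \<notin> \<real>\<^sub>\<le>\<^sub>0}"
  have "S = - \<real>\<^sub>\<le>\<^sub>0 \<inter> (\<lambda>t. b + b' * t) -` (- \<real>\<^sub>\<le>\<^sub>0)"
    by (auto simp: S_def)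
  then have "open S"
    by (auto intro!: open_Int open_vimage continuous_intros)
  moreover have "t \<in> S"
    using assms by (simp add: S_def)
  ultimately show ?thesis
    unfolding ah_def ah'_def ch_def ch'_def using assms(1,2)
    by (intro funpow_weighted_deriv_eqI[where S = S] gkp_row_weighted_deriv_Suc)
       (auto simp: S_def gkp_row_0)
qed

theorem mainTheorem2:
  fixes a b c a' b' c' :: complex
  defines "A \<equiv> [:a, a':]" and "B \<equiv> [:0, b, b':]" and "C \<equiv> [:c, c':]"
  defines "G \<equiv> gkp_egf a b c a' b' c'" and "Gn \<equiv> gkp_row a b c a' b' c'"
  shows
    "((fps_const A * fps_X - 1) * fps_deriv G + fps_const B * fps_pderiv_t G
        + fps_const C * G = 0 \<and> fps_nth G 0 = 1)
   \<and> (Gn 0 = 1 \<and>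
      (\<forall>n. Gn (Suc n) = (smult (of_nat n) A + C) * Gn n + B * pderiv (Gn n)))
   \<and> (b * b' \<noteq> 0 \<longrightarrow>
      (let ah = a / b; ah' = - a' / b'; ch = c / b; ch' = - c' / b';
           L = (\<lambda>f t. t powr (1 + ah) * (b + b' * t) powr (1 - ah - ah') * deriv f t);
           f0 = (\<lambda>t. t powr ch / (b + b' * t) powr (ch + ch'))
       in \<forall>n t. (Im t \<noteq> 0 \<or> Re t > 0) \<and> (Im (b + b' * t) \<noteq> 0 \<or> Re (b + b' * t) > 0) \<longrightarrow>
            (L ^^ n) f0 t =
              t powr (ah * of_nat n + ch) * poly (Gn n) t
                / (b + b' * t) powr ((ah + ah') * of_nat n + ch + ch')))"
proof -
  have row_rec: "Gn (Suc n) = (smult (of_nat n) A + C) * Gn n + B * pderiv (Gn n)" for n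
    unfolding Gn_def A_def B_def C_def by (rule gkp_row_Suc)
  have "(fps_const A * fps_X - 1) * fps_deriv G + fps_const B * fps_pderiv_t G
        + fps_const C * G = 0"
    unfolding G_def gkp_egf_def Gn_def[symmetric] using row_rec by (rule egf_pde_of_row_recurrence)
  moreover have "fps_nth G 0 = 1" "Gn 0 = 1"
    by (simp_all add: G_def gkp_egf_def Gn_def gkp_row_0)
  ultimately show ?thesis
    using row_rec gkp_row_operator_power
    by (auto simp: Let_def Gn_def complex_nonpos_Reals_iff)
qed

end
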